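(* Let $A\subset\mathbf{Z}_{\geq 0}$ be finite with $0\in A$, $N=\#A\geq 2$, $A(x)=\sum_{a\in A}x^a$, and suppose $A(x)$ satisfies (T1) and (T2). Let $B$ be the set of all real numbers of the form $\sum_{s\in S_A}\frac{k_s}{s}$, where for each $s=p^\beta\in S_A$ ($p$ prime) the integer $k_s$ ranges over $\{0,1,\dots,p-1\}$. Then $\#B=N$ and $A(e^{2\pi i(b-b')})=0$ for all $b,b'\in B$ with $b\neq b'$.
   Context: $\Phi_s(x)$ denotes the $s$-th cyclotomic polynomial. $S_A$ is the set of prime powers $s$ such that $\Phi_s(x)$ divides $A(x)$. Condition (T1): $A(1)=\prod_{s\in S_A}\Phi_s(1)$. Condition (T2): if $s_1,\dots,s_k\in S_A$ are powers of pairwise distinct primes, then $\Phi_{s_1\cdots s_k}(x)$ divides $A(x)$. *)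

theory Defs
  imports "HOL-Analysis.Analysis" "HOL-Number_Theory.Prime_Powers"
    "HOL-Computational_Algebra.Polynomial"
begin

definition cyclotomic :: "nat \<Rightarrow> complex poly" where
  "cyclotomic s = (\<Prod>k\<in>{k\<in>{1..s}. coprime k s}.
      [:- cis (2 * pi * real k / real s), 1:])"

definition mask_poly :: "nat set \<Rightarrow> complex poly" where
  "mask_poly A = (\<Sum>a\<in>A. monom 1 a)"

definition S_set :: "nat set \<Rightarrow> nat set" where
  "S_set A = {s. primepow s \<and> cyclotomic s dvd mask_poly A}"

definition T1 :: "nat set \<Rightarrow> bool" where
  "T1 A \<longleftrightarrow> poly (mask_poly A) 1 = (\<Prod>s\<in>S_set A. poly (cyclotomic s) 1)"

definition T2 :: "nat set \<Rightarrow> bool" where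
  "T2 A \<longleftrightarrow> (\<forall>T. finite T \<and> T \<noteq> {} \<and> T \<subseteq> S_set A \<and> inj_on aprimedivisor T
      \<longrightarrow> cyclotomic (\<Prod>T) dvd mask_poly A)"

end

(*
  T1 and Phi_{p^b}(1) = p give #A = prod_{s in S_A} p_s, the number of digit vectors (k_s).
  For two distinct digit vectors, group the fractions (k_s - k'_s)/s by prime: over the
  common denominator t, the largest power of p with a nonzero digit difference, every
  other p-term has a numerator divisible by p, so the p-part is a reduced fraction c/t.
  Summing over the primes, b - b' = J/M in lowest terms, with M a product of powers of
  distinct primes from S_A.  By T2, Phi_M divides A(x), and e^{2 pi i (b - b')} is a
  primitive M-th root of unity, hence a root of A.  Equal sums for distinct digit vectors
  would give A(1) = #A = 0, so the sums are distinct and #B = #A.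
*)
theory Submission
  imports Defs "HOL-Number_Theory.Totient"
begin

lemma prod_root_of_unity_factors:
  assumes "n > 0"
  shows "(\<Prod>k<n. [:- cis (2 * pi * real k / real n), 1:]) = (monom 1 n - 1 :: complex poly)"
  (is "?P = _")
proof (rule poly_eqI_degree_lead_coeff[where n = n and A = "{z. z ^ n = 1}"])
  have deg: "degree ?P = n"
    by (subst degree_prod_eq_sum_degree) auto
  moreover have "lead_coeff ?P = 1"
    by (simp add: lead_coeff_prod)
  ultimately show "coeff ?P n = coeff (monom 1 n - 1 :: complex poly) n"
    using assms by (simp add: coeff_diff)
  show "n \<le> card {z::complex. z ^ n = 1}"
    using card_roots_unity_eq[OF assms] by simp
  show "degree ?P \<le> n" using deg by simp
  show "degree (monom 1 n - 1 :: complex poly) \<le> n"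
    by (rule order.trans[OF degree_diff_le_max]) (simp add: degree_monom_eq)
  fix z :: complex assume z: "z \<in> {z. z ^ n = 1}"
  then obtain k where "k < n" "z = cis (2 * pi * real k / real n)"
    using Complex.bij_betw_roots_unity[OF assms] by (auto simp: bij_betw_def)
  then have "poly ?P z = 0"
    unfolding poly_prod by (intro prod_zero) auto
  moreover have "poly (monom 1 n - 1 :: complex poly) z = 0"
    using z by (simp add: poly_monom)
  ultimately show "poly ?P z = poly (monom 1 n - 1) z" by simp
qed

lemma cyclotomic_prime_power_mult:
  assumes p: "prime p"
  shows "cyclotomic (p ^ Suc b) * (monom 1 (p ^ b) - 1) = monom 1 (p ^ Suc b) - 1"
proof -
  define s where "s = p ^ Suc b"
  define m where "m = p ^ b"
  define f where "f = (\<lambda>k. [:- cis (2 * pi * real k / real s), 1:] :: complex poly)"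
  have p0: "p > 0" and s1: "s > 1" and m0: "m > 0"
    using p prime_gt_1_nat[OF p] one_less_power[of p "Suc b"] by (auto simp: s_def m_def)
  have sm: "s = p * m" by (simp add: s_def m_def)
  have primitive: "{k\<in>{1..s}. coprime k s} = {k\<in>{..<s}. coprime k s}"
  proof -
    have "k \<in> {1..s} \<longleftrightarrow> k \<in> {..<s}" if "coprime k s" for k
      using s1 that by (cases "k = 0 \<or> k = s") (auto simp: Suc_le_eq)
    then show ?thesis by blast
  qed
  have non_primitive: "{k\<in>{..<s}. \<not> coprime k s} = (\<lambda>j. p * j) ` {..<m}"
  proof safe
    fix k assume "k < s" "\<not> coprime k s"
    then have "p dvd k"
      using p by (metis coprime_commute coprime_power_right_iff prime_imp_coprime s_def)
    then show "k \<in> (\<lambda>j. p * j) ` {..<m}"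
      using \<open>k < s\<close> sm p0 by (auto elim!: dvdE)
  qed (use sm p0 p in \<open>auto simp: s_def prime_gt_1_nat\<close>)
  have "monom 1 s - 1 = (\<Prod>k<s. f k)"
    using s1 by (simp add: f_def prod_root_of_unity_factors)
  also have "\<dots> = (\<Prod>k\<in>{k\<in>{..<s}. coprime k s}. f k) * (\<Prod>k\<in>{k\<in>{..<s}. \<not> coprime k s}. f k)"
    by (subst prod.union_disjoint[symmetric]) (auto intro: prod.cong)
  also have "(\<Prod>k\<in>{k\<in>{..<s}. coprime k s}. f k) = cyclotomic s"
    by (simp only: cyclotomic_def primitive f_def)
  also have "(\<Prod>k\<in>{k\<in>{..<s}. \<not> coprime k s}. f k) = (\<Prod>j<m. f (p * j))"
    unfolding non_primitive using p0 by (subst prod.reindex) (auto simp: inj_on_def)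
  also have "\<dots> = (\<Prod>j<m. [:- cis (2 * pi * real j / real m), 1:])"
    using p0 by (intro prod.cong refl) (simp add: f_def sm mult.assoc)
  also have "\<dots> = monom 1 m - 1"
    using m0 by (rule prod_root_of_unity_factors)
  finally show ?thesis by (simp add: s_def m_def)
qed

lemma cyclotomic_prime_power:
  assumes "prime p"
  shows "cyclotomic (p ^ Suc b) = (\<Sum>j<p. monom 1 (p ^ b * j))"
proof -
  define m where "m = p ^ b"
  have "monom 1 m - 1 \<noteq> (0 :: complex poly)"
  proof
    assume "monom 1 m - 1 = (0 :: complex poly)"
    then have "coeff (monom 1 m - 1 :: complex poly) m = 0" by simp
    then show False using assms by (simp add: m_def prime_gt_0_nat)
  qed
  moreover have "(\<Sum>j<p. monom 1 (m * j)) * (monom 1 m - 1) = (monom 1 (p * m) - 1 :: complex poly)"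
  proof (rule poly_ext)
    fix x :: complex
    have "(x ^ m - 1) * (\<Sum>j<p. (x ^ m) ^ j) = (x ^ m) ^ p - 1"
      by (rule power_diff_1_eq[symmetric])
    then show "poly ((\<Sum>j<p. monom 1 (m * j)) * (monom 1 m - 1)) x = poly (monom 1 (p * m) - 1) x"
      by (simp add: poly_monom poly_sum mult.commute flip: power_mult)
  qed
  moreover have "cyclotomic (p ^ Suc b) * (monom 1 m - 1) = monom 1 (p * m) - 1"
    using cyclotomic_prime_power_mult[OF assms, of b] by (simp add: m_def)
  ultimately show ?thesis
    by (metis m_def mult_right_cancel)
qed

lemma poly_cyclotomic_primepow_1:
  assumes "primepow s"
  shows "poly (cyclotomic s) 1 = of_nat (aprimedivisor s)"
proof -
  obtain p b where p: "prime p" and s: "s = p ^ Suc b"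
    using assms by (auto simp: primepow_def gr0_conv_Suc)
  have "poly (cyclotomic s) 1 = of_nat p"
    unfolding s cyclotomic_prime_power[OF p] by (simp add: poly_sum poly_monom)
  then show ?thesis
    using p by (simp add: s aprimedivisor_prime_power del: power_Suc)
qed

lemma degree_cyclotomic: "degree (cyclotomic s) = totient s"
proof -
  have "degree (cyclotomic s) = card {k\<in>{1..s}. coprime k s}"
    unfolding cyclotomic_def by (subst degree_prod_eq_sum_degree) auto
  also have "{k\<in>{1..s}. coprime k s} = totatives s"
    by (auto simp: totatives_def)
  finally show ?thesis by (simp add: totient_def)
qed

lemma poly_cyclotomic_exp_coprime:
  assumes "coprime j (int M)" "M > 1"
  shows "poly (cyclotomic M) (exp (2 * pi * \<i> * complex_of_real (real_of_int j / real M))) = 0"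
proof -
  define k where "k = nat (j mod int M)"
  have k_int: "int k = j mod int M"
    using assms(2) by (simp add: k_def)
  have "coprime k M"
    using assms by (simp flip: coprime_int_iff add: k_int)
  moreover have "k \<noteq> 0"
  proof
    assume "k = 0"
    with \<open>coprime k M\<close> assms(2) show False by simp
  qed
  moreover have "k < M"
    using assms(2) pos_mod_bound[of "int M" j] by (simp add: k_def nat_less_iff)
  ultimately have k: "k \<in> {k\<in>{1..M}. coprime k M}"
    by auto
  have j: "j = j div int M * int M + int k"
    by (simp add: k_int)
  have "real_of_int j / real M = real_of_int (j div int M) + real k / real M"
    using assms(2) by (subst j) (simp add: field_simps)
  then have "exp (2 * pi * \<i> * complex_of_real (real_of_int j / real M))
      = cis (2 * pi * real_of_int (j div int M)) * cis (2 * pi * real k / real M)"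
    by (simp add: cis_conv_exp exp_add algebra_simps)
  also have "\<dots> = cis (2 * pi * real k / real M)"
    by simp
  finally show ?thesis
    unfolding cyclotomic_def poly_prod using k by (intro prod_zero) auto
qed

lemma poly_mask_poly_1: "poly (mask_poly A) 1 = of_nat (card A)"
  by (simp add: mask_poly_def poly_sum poly_monom)

lemma mask_poly_nonzero:
  assumes "finite A" "a \<in> A"
  shows "mask_poly A \<noteq> 0"
proof -
  have "coeff (mask_poly A) a = 1"
    using assms by (simp add: mask_poly_def coeff_sum coeff_monom)
  then show ?thesis by auto
qed

lemma primepow_le_2_totient:
  assumes "primepow s"
  shows "s \<le> 2 * totient s"
proof -
  obtain p b where p: "prime p" and s: "s = p ^ Suc b"
    using assms by (auto simp: primepow_def gr0_conv_Suc)
  have "p \<le> 2 * (p - 1)"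
    using prime_ge_2_nat[OF p] by simp
  then have "p ^ b * p \<le> p ^ b * (2 * (p - 1))"
    by (rule mult_le_mono2)
  then show ?thesis
    unfolding s totient_prime_power_Suc[OF p] by (simp add: mult.commute mult.left_commute)
qed

lemma finite_S_set:
  assumes "finite A" "a \<in> A"
  shows "finite (S_set A)"
proof (rule finite_subset)
  show "S_set A \<subseteq> {..2 * degree (mask_poly A)}"
  proof
    fix s assume "s \<in> S_set A"
    then have s: "primepow s" "cyclotomic s dvd mask_poly A"
      by (auto simp: S_set_def)
    have "cyclotomic s \<noteq> 0"
      using primepow_gt_0_nat[OF s(1)] degree_cyclotomic[of s] by auto
    then have "totient s \<le> degree (mask_poly A)"
      using dvd_imp_degree[OF s(2)] mask_poly_nonzero[OF assms] by (simp add: degree_cyclotomic)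
    then show "s \<in> {..2 * degree (mask_poly A)}"
      using primepow_le_2_totient[OF s(1)] by simp
  qed
qed simp

lemma card_eq_prod_S_set:
  assumes "T1 A"
  shows "card A = (\<Prod>s\<in>S_set A. aprimedivisor s)"
proof -
  have "(of_nat (card A) :: complex) = (\<Prod>s\<in>S_set A. poly (cyclotomic s) 1)"
    using assms by (simp add: T1_def poly_mask_poly_1)
  also have "\<dots> = of_nat (\<Prod>s\<in>S_set A. aprimedivisor s)"
    by (simp add: S_set_def poly_cyclotomic_primepow_1)
  finally show ?thesis
    by (simp only: of_nat_eq_iff)
qed

lemma sum_reduced_fractions_pairwise_coprime:
  fixes c :: "'a \<Rightarrow> int" and m :: "'a \<Rightarrow> nat"
  assumes "finite I" "\<And>i. i \<in> I \<Longrightarrow> m i > 0" "\<And>i. i \<in> I \<Longrightarrow> coprime (c i) (int (m i))"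
    "pairwise (\<lambda>i j. coprime (m i) (m j)) I"
  shows "\<exists>J. (\<Sum>i\<in>I. c i / m i) = J / (\<Prod>i\<in>I. m i) \<and> coprime J (int (\<Prod>i\<in>I. m i))"
  using assms
proof (induction I rule: finite_induct)
  case empty
  show ?case by simp
next
  case (insert i I)
  define M where "M = (\<Prod>j\<in>I. m j)"
  obtain J' where J': "(\<Sum>j\<in>I. c j / m j) = J' / M" "coprime J' (int M)"
    using insert by (auto simp: M_def pairwise_insert)
  have "coprime (m i) M"
    using insert.hyps insert.prems(3) unfolding M_def
    by (intro prod_coprime_right) (auto simp: pairwise_insert)
  then have coprime_i: "coprime (int (m i)) (int M)"
    by simp
  have "m i > 0" "M > 0"
    using insert.prems(1) by (auto simp: M_def intro!: prod_pos)
  define J where "J = c i * int M + J' * int (m i)"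
  have "gcd J (int (m i)) = gcd (c i * int M) (int (m i))"
    unfolding J_def by (metis gcd.commute add.commute gcd_add_mult)
  moreover have "coprime (c i * int M) (int (m i))"
    using insert.prems(2) coprime_i by (simp add: coprime_commute)
  ultimately have coprime_J_i: "coprime J (int (m i))"
    by (simp add: coprime_iff_gcd_eq_1)
  have "gcd J (int M) = gcd (J' * int (m i)) (int M)"
    unfolding J_def by (metis gcd.commute gcd_add_mult mult.commute)
  moreover have "coprime (J' * int (m i)) (int M)"
    using J'(2) coprime_i by simp
  ultimately have coprime_J_M: "coprime J (int M)"
    by (simp add: coprime_iff_gcd_eq_1)
  have "c i / m i + J' / M = J / (m i * M)"
    using \<open>m i > 0\<close> \<open>M > 0\<close> by (simp add: J_def field_simps)
  then show ?case
    using insert.hyps J'(1) coprime_J_i coprime_J_M by (auto simp: M_def)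
qed

lemma sum_fractions_dividing_denominator:
  fixes d :: "nat \<Rightarrow> int"
  assumes "finite E" "t \<in> E" "t > 0" "\<And>s. s \<in> E - {t} \<Longrightarrow> p * s dvd t"
  shows "\<exists>c. (\<Sum>s\<in>E. d s / s) = c / t \<and> int p dvd c - d t"
proof (intro exI conjI)
  define c where "c s = d s * int (t div s)" for s
  have "d s / s = c s / t" if "s \<in> E" for s
  proof -
    have "s dvd t"
      using assms(4)[of s] that by (cases "s = t") (auto intro: dvd_mult_right)
    then obtain k where k: "t = s * k" ..
    then have "s > 0" "k > 0"
      using assms(3) by auto
    then show ?thesis
      by (simp add: c_def k)
  qed
  then show "(\<Sum>s\<in>E. d s / s) = (\<Sum>s\<in>E. c s) / t"
    by (simp add: sum_divide_distrib)
  have "int p dvd c s" if "s \<in> E - {t}" for s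
    using assms(4)[OF that] assms(3) by (auto simp: c_def elim!: dvdE)
  then have "int p dvd (\<Sum>s\<in>E - {t}. c s)"
    by (rule dvd_sum)
  then show "int p dvd (\<Sum>s\<in>E. c s) - d t"
    using assms(1,2,3) by (simp add: sum.remove c_def)
qed

lemma primepow_eq_aprimedivisor_power:
  assumes "primepow (s :: nat)"
  obtains k where "k > 0" "s = aprimedivisor s ^ k" "prime (aprimedivisor s)"
  using assms by (auto simp: primepow_def aprimedivisor_prime_power)

lemma primepow_less_imp_aprimedivisor_mult_dvd:
  assumes "primepow (s :: nat)" "primepow t" "aprimedivisor s = aprimedivisor t" "s < t"
  shows "aprimedivisor t * s dvd t"
proof -
  define p where "p = aprimedivisor t"
  obtain a where a: "s = p ^ a"
    using primepow_eq_aprimedivisor_power[OF assms(1)] assms(3) unfolding p_def by metis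
  obtain b where b: "t = p ^ b" "prime p"
    using primepow_eq_aprimedivisor_power[OF assms(2)] unfolding p_def by metis
  have "a < b"
    using assms(4) a b prime_gt_1_nat power_less_imp_less_exp by metis
  then have "p ^ Suc a dvd p ^ b"
    by (intro le_imp_power_dvd) simp
  then show ?thesis
    by (metis a b p_def power_Suc)
qed

lemma coprime_primepow_distinct_primes:
  assumes "primepow (s :: nat)" "primepow t" "aprimedivisor s \<noteq> aprimedivisor t"
  shows "coprime s t"
  using assms by (metis primepow_eq_aprimedivisor_power coprime_power_left_iff
      coprime_power_right_iff primes_coprime)

lemma coprime_primepow_if_not_dvd:
  assumes "primepow t" "\<not> int (aprimedivisor t) dvd c"
  shows "coprime c (int t)"
proof -
  obtain k where "t = aprimedivisor t ^ k" "prime (aprimedivisor t)"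
    using assms(1) primepow_eq_aprimedivisor_power by metis
  then show ?thesis
    using assms(2) prime_imp_power_coprime[of "int (aprimedivisor t)" c k]
    by (metis of_nat_power prime_nat_int_transfer)
qed

lemma sum_fractions_same_prime:
  fixes d :: "nat \<Rightarrow> int"
  assumes "finite E" "E \<noteq> {}" "\<And>s. s \<in> E \<Longrightarrow> primepow s \<and> aprimedivisor s = p"
    "\<not> int p dvd d (Max E)"
  shows "\<exists>c. (\<Sum>s\<in>E. d s / s) = c / Max E \<and> coprime c (int (Max E))"
proof -
  define t where "t = Max E"
  have t: "t \<in> E" "primepow t" "aprimedivisor t = p"
    using assms Max_in unfolding t_def by auto
  have "p * s dvd t" if "s \<in> E - {t}" for s
    using that assms(1,3) t primepow_less_imp_aprimedivisor_mult_dvd[of s t]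
    by (auto simp: t_def order.not_eq_order_implies_strict)
  then obtain c where c: "(\<Sum>s\<in>E. d s / s) = c / t" "int p dvd c - d t"
    using sum_fractions_dividing_denominator[OF assms(1) t(1) primepow_gt_0_nat[OF t(2)]]
    by blast
  have "\<not> int p dvd c"
    using c(2) assms(4) unfolding t_def by (metis dvd_diff_commute dvd_add_right_iff diff_add_cancel)
  then show ?thesis
    using c(1) t coprime_primepow_if_not_dvd[of t c] unfolding t_def by auto
qed

lemma sum_primepow_fractions_reduced:
  fixes d :: "nat \<Rightarrow> int"
  assumes "finite S" "S \<noteq> {}" "\<And>s. s \<in> S \<Longrightarrow> primepow s"
    "\<And>s. s \<in> S \<Longrightarrow> d s \<noteq> 0 \<and> \<bar>d s\<bar> < int (aprimedivisor s)"
  obtains T J where "T \<subseteq> S" "T \<noteq> {}" "inj_on aprimedivisor T" "coprime J (int (\<Prod>T))"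
    "(\<Sum>s\<in>S. d s / s) = J / \<Prod>T"
proof -
  define P where "P = aprimedivisor ` S"
  define E where "E p = {s\<in>S. aprimedivisor s = p}" for p
  define top where "top p = Max (E p)" for p
  have E: "finite (E p)" "E p \<noteq> {}" if "p \<in> P" for p
    using that assms(1) by (auto simp: E_def P_def)
  have top: "top p \<in> S" "primepow (top p)" "aprimedivisor (top p) = p" if "p \<in> P" for p
    using Max_in[OF E[OF that]] assms(3) by (auto simp: top_def E_def)
  have not_dvd: "\<not> int p dvd d (top p)" if "p \<in> P" for p
    using assms(4)[OF top(1)[OF that]] top(3)[OF that] dvd_imp_le_int[of "d (top p)" "int p"]
    by auto
  have "\<exists>c. (\<Sum>s\<in>E p. d s / s) = c / top p \<and> coprime c (int (top p))" if "p \<in> P" for p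
    using sum_fractions_same_prime[OF E[OF that], of p d] not_dvd[OF that] assms(3)
    by (auto simp: top_def E_def)
  then obtain c where c: "\<And>p. p \<in> P \<Longrightarrow> (\<Sum>s\<in>E p. d s / s) = c p / top p \<and> coprime (c p) (int (top p))"
    by metis
  have "pairwise (\<lambda>p q. coprime (top p) (top q)) P"
    using top by (auto simp: pairwise_def intro: coprime_primepow_distinct_primes)
  then obtain J where J: "(\<Sum>p\<in>P. c p / top p) = J / (\<Prod>p\<in>P. top p)" "coprime J (int (\<Prod>p\<in>P. top p))"
    using sum_reduced_fractions_pairwise_coprime[of P top c] assms(1) c top(2) primepow_gt_0_nat
    by (auto simp: P_def)
  have inj: "inj_on top P"
    using top(3) by (metis inj_onI)
  have "(\<Sum>s\<in>S. d s / s) = (\<Sum>p\<in>P. \<Sum>s\<in>E p. d s / s)"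
    unfolding E_def P_def using assms(1) by (intro sum.group[symmetric]) auto
  also have "\<dots> = J / (\<Prod>p\<in>P. top p)"
    using c J(1) by simp
  also have "(\<Prod>p\<in>P. top p) = \<Prod>(top ` P)"
    using inj by (simp add: prod.reindex)
  finally have sum_eq: "(\<Sum>s\<in>S. d s / s) = J / \<Prod>(top ` P)" .
  show ?thesis
  proof (rule that[OF _ _ _ _ sum_eq])
    show "top ` P \<subseteq> S"
      using top(1) by auto
    show "top ` P \<noteq> {}"
      using assms(2) by (simp add: P_def)
    show "inj_on aprimedivisor (top ` P)"
      using top(3) by (auto simp: inj_on_def)
    show "coprime J (int (\<Prod>(top ` P)))"
      using J(2) inj by (simp add: prod.reindex)
  qed
qed

lemma poly_mask_poly_digit_sum_difference_eq_0:
  fixes k k' :: "nat \<Rightarrow> nat"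
  assumes "finite (S_set A)" "T2 A"
    "k \<in> PiE (S_set A) (\<lambda>s. {..<aprimedivisor s})" "k' \<in> PiE (S_set A) (\<lambda>s. {..<aprimedivisor s})"
    "k \<noteq> k'"
  shows "poly (mask_poly A) (exp (2 * pi * \<i> * complex_of_real
      ((\<Sum>s\<in>S_set A. real (k s) / real s) - (\<Sum>s\<in>S_set A. real (k' s) / real s)))) = 0"
proof -
  define S where "S = {s\<in>S_set A. k s \<noteq> k' s}"
  define d where "d s = int (k s) - int (k' s)" for s
  have S: "finite S" "S \<noteq> {}" "S \<subseteq> S_set A"
    using assms(1) PiE_ext[OF assms(3,4)] assms(5) by (auto simp: S_def)
  have primepow: "primepow s" if "s \<in> S" for s
    using that by (auto simp: S_def S_set_def)
  have digit_bound: "d s \<noteq> 0 \<and> \<bar>d s\<bar> < int (aprimedivisor s)" if "s \<in> S" for s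
    using that PiE_mem[OF assms(3), of s] PiE_mem[OF assms(4), of s] by (auto simp: S_def d_def)
  obtain T J where T: "T \<subseteq> S" "T \<noteq> {}" "inj_on aprimedivisor T"
    and J: "coprime J (int (\<Prod>T))" "(\<Sum>s\<in>S. d s / s) = J / \<Prod>T"
    by (rule sum_primepow_fractions_reduced[OF S(1,2) primepow digit_bound])
  have "(\<Sum>s\<in>S_set A. real (k s) / real s) - (\<Sum>s\<in>S_set A. real (k' s) / real s)
      = (\<Sum>s\<in>S_set A. d s / s)"
    by (simp add: d_def sum_subtractf diff_divide_distrib)
  also have "\<dots> = (\<Sum>s\<in>S. d s / s)"
    using assms(1) S(3) by (intro sum.mono_neutral_right) (auto simp: S_def d_def)
  finally have diff: "(\<Sum>s\<in>S_set A. real (k s) / real s) - (\<Sum>s\<in>S_set A. real (k' s) / real s)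
      = J / \<Prod>T"
    using J(2) by simp
  have "finite T" "T \<subseteq> S_set A"
    using T(1) S by (auto intro: finite_subset)
  then have "cyclotomic (\<Prod>T) dvd mask_poly A"
    using assms(2) T(2,3) by (auto simp: T2_def)
  then obtain r where r: "mask_poly A = cyclotomic (\<Prod>T) * r" ..
  obtain t where t: "t \<in> T"
    using T(2) by blast
  have "1 < t"
    using t T(1) primepow primepow_gt_Suc_0 by fastforce
  also have "t \<le> \<Prod>T"
    using t T(1) primepow primepow_gt_0_nat \<open>finite T\<close>
    by (intro dvd_imp_le dvd_prodI prod_pos) auto
  finally have "\<Prod>T > 1" .
  then show ?thesis
    unfolding diff r poly_mult poly_cyclotomic_exp_coprime[OF J(1) \<open>\<Prod>T > 1\<close>] by simp
qed

lemma digit_sums_eq_image_PiE: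
  "{(\<Sum>s\<in>S. real (k s) / real s) | k :: nat \<Rightarrow> nat. \<forall>s\<in>S. k s < f s}
    = (\<lambda>k. \<Sum>s\<in>S. real (k s) / real s) ` PiE S (\<lambda>s. {..<f s})"
proof (intro equalityI subsetI)
  fix b assume "b \<in> {(\<Sum>s\<in>S. real (k s) / real s) | k :: nat \<Rightarrow> nat. \<forall>s\<in>S. k s < f s}"
  then obtain k where k: "b = (\<Sum>s\<in>S. real (k s) / real s)" "\<forall>s\<in>S. k s < f s"
    by blast
  then have "restrict k S \<in> PiE S (\<lambda>s. {..<f s})" "b = (\<Sum>s\<in>S. real (restrict k S s) / real s)"
    by auto
  then show "b \<in> (\<lambda>k. \<Sum>s\<in>S. real (k s) / real s) ` PiE S (\<lambda>s. {..<f s})"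
    by blast
qed (auto simp: PiE_iff)

lemma inj_on_if_poly_vanishes_at_differences:
  fixes p :: "complex poly" and v :: "'a \<Rightarrow> real"
  assumes "poly p 1 \<noteq> 0"
    "\<And>k k'. k \<in> K \<Longrightarrow> k' \<in> K \<Longrightarrow> k \<noteq> k' \<Longrightarrow> poly p (exp (2 * pi * \<i> * complex_of_real (v k - v k'))) = 0"
  shows "inj_on v K"
proof (rule inj_onI, rule ccontr)
  fix k k' assume "k \<in> K" "k' \<in> K" "v k = v k'" "k \<noteq> k'"
  then have "poly p (exp (2 * pi * \<i> * complex_of_real (v k - v k'))) = 0"
    using assms(2) by blast
  with \<open>v k = v k'\<close> assms(1) show False
    by simp
qed

theorem mainTheorem2:
  fixes A :: "nat set"
  assumes "finite A" and "0 \<in> A" and "card A \<ge> 2"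
    and "T1 A" and "T2 A"
  defines "B \<equiv> {(\<Sum>s\<in>S_set A. real (k s) / real s) | k :: nat \<Rightarrow> nat.
                   \<forall>s\<in>S_set A. k s < aprimedivisor s}"
  shows "card B = card A \<and>
    (\<forall>b\<in>B. \<forall>b'\<in>B. b \<noteq> b' \<longrightarrow>
       poly (mask_poly A) (exp (2 * pi * \<i> * complex_of_real (b - b'))) = 0)"
proof -
  define v where "v k = (\<Sum>s\<in>S_set A. real (k s) / real s)" for k :: "nat \<Rightarrow> nat"
  define K where "K = PiE (S_set A) (\<lambda>s. {..<aprimedivisor s})"
  have fin: "finite (S_set A)"
    using finite_S_set assms(1,2) .
  have B: "B = v ` K"
    unfolding B_def v_def K_def by (rule digit_sums_eq_image_PiE)
  have root: "poly (mask_poly A) (exp (2 * pi * \<i> * complex_of_real (v k - v k'))) = 0"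
    if "k \<in> K" "k' \<in> K" "k \<noteq> k'" for k k'
    using poly_mask_poly_digit_sum_difference_eq_0[OF fin assms(5)] that
    unfolding K_def v_def by blast
  have "poly (mask_poly A) 1 \<noteq> 0"
    using assms(3) by (simp add: poly_mask_poly_1)
  then have "inj_on v K"
    using root by (rule inj_on_if_poly_vanishes_at_differences)
  then have "card B = card A"
    using fin by (simp add: B K_def card_image card_PiE card_eq_prod_S_set[OF assms(4)])
  moreover have "poly (mask_poly A) (exp (2 * pi * \<i> * complex_of_real (b - b'))) = 0"
    if "b \<in> B" "b' \<in> B" "b \<noteq> b'" for b b'
    using that root by (auto simp: B)
  ultimately show ?thesis
    by blast
qed

end
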